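(* The functor $\sigma:\mathcal{T}_q\to\mathcal{S}_q$ is full: for every morphism $S=[V\xleftarrow{f}D\xrightarrow{g}W]$ of $\mathcal{S}_q$ there is $T\in\mathrm{Hom}_{\mathcal{T}_q}(V,W)$ with $\sigma(T)=S$.
   Context: All vector spaces over $\mathbb{F}_2$. $\mathcal{E}_q^{deg}$: objects finite-dimensional quadratic spaces (possibly degenerate), morphisms injective linear maps preserving quadratic forms; pullbacks are intersections of images with restricted form. $\mathrm{Sp}(\mathcal{E}_q^{deg})$: morphisms spans $[V\leftarrow D\rightarrow W]$ up to iso of $D$, composed by pullback; $\mathcal{S}_q$ is its full subcategory on non-degenerate spaces (polar form $q(x+y)+q(x)+q(y)$ with trivial radical). $\mathcal{E}_q$: full subcategory of $\mathcal{E}_q^{deg}$ on non-degenerate spaces. Pseudo push-out of $f:V\to W=f(V)\perp V'$ and $g:V\to X=g(V)\perp V''$: $V\perp V'\perp V''$ with maps $f(v)+v'\mapsto v+v'$, $g(v)+v''\mapsto v+v''$. $\mathcal{T}_q$: objects of $\mathcal{E}_q$; morphisms classes of cospans $[V\to X\leftarrow W]$ in $\mathcal{E}_q$ modulo the equivalence relation generated by existence of an $\mathcal{E}_q$-morphism between middle objects compatible with the legs; composition by pseudo push-out. $\sigma$ is the identity on objects and sends $[V\to X\leftarrow W]$ to $[V\leftarrow V\times_X W\rightarrow W]$. *)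

theory Defs
  imports Main "HOL-Library.Z2"
begin

(* Ambient F_2-vector space: subsets of nat, addition = symmetric difference, zero = {}.
   Every finite-dimensional F_2-vector space is (isomorphic to) a finite subspace of it. *)
type_synonym vec = "nat set"

definition vadd :: "vec \<Rightarrow> vec \<Rightarrow> vec" where
  "vadd x y = (x - y) \<union> (y - x)"

record qspace =
  carrier :: "vec set"
  form :: "vec \<Rightarrow> bit"

definition polar :: "qspace \<Rightarrow> vec \<Rightarrow> vec \<Rightarrow> bit" where
  "polar Q x y = form Q (vadd x y) + form Q x + form Q y"

definition subspace :: "vec set \<Rightarrow> bool" where
  "subspace S \<longleftrightarrow> {} \<in> S \<and> (\<forall>x\<in>S. \<forall>y\<in>S. vadd x y \<in> S)"

(* quadratic form over F_2: q(0)=0 (q(\<lambda>x)=\<lambda>^2 q(x)) and bilinear polar form *)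
definition quad_space :: "qspace \<Rightarrow> bool" where
  "quad_space Q \<longleftrightarrow> finite (carrier Q) \<and> subspace (carrier Q) \<and> form Q {} = 0 \<and>
     (\<forall>x\<in>carrier Q. \<forall>y\<in>carrier Q. \<forall>z\<in>carrier Q.
        polar Q (vadd x y) z = polar Q x z + polar Q y z)"

definition nondeg :: "qspace \<Rightarrow> bool" where
  "nondeg Q \<longleftrightarrow> quad_space Q \<and>
     (\<forall>x\<in>carrier Q. (\<forall>y\<in>carrier Q. polar Q x y = 0) \<longrightarrow> x = {})"

definition qmor :: "qspace \<Rightarrow> qspace \<Rightarrow> (vec \<Rightarrow> vec) \<Rightarrow> bool" where
  "qmor Q R f \<longleftrightarrow> (\<forall>x\<in>carrier Q. f x \<in> carrier R) \<and>
     (\<forall>x\<in>carrier Q. \<forall>y\<in>carrier Q. f (vadd x y) = vadd (f x) (f y)) \<and>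
     inj_on f (carrier Q) \<and> (\<forall>x\<in>carrier Q. form R (f x) = form Q x)"

(* a span [V <- D -> W] *)
type_synonym span = "qspace \<times> (vec \<Rightarrow> vec) \<times> (vec \<Rightarrow> vec)"

(* equality of morphisms in Sp(E_q^deg): spans are identified up to isomorphism of the apex
   compatible with the legs *)
definition span_eq :: "span \<Rightarrow> span \<Rightarrow> bool" where
  "span_eq S S' \<longleftrightarrow> (case S of (D, f, g) \<Rightarrow> case S' of (D', f', g') \<Rightarrow>
     (\<exists>h. qmor D D' h \<and> h ` carrier D = carrier D' \<and>
          (\<forall>d\<in>carrier D. f' (h d) = f d \<and> g' (h d) = g d)))"

(* pullback in E_q^deg of i: V -> X <- W: j : intersection of images with restricted form *)
definition pullback_obj :: "qspace \<Rightarrow> qspace \<Rightarrow> qspace \<Rightarrow> (vec \<Rightarrow> vec) \<Rightarrow> (vec \<Rightarrow> vec) \<Rightarrow> qspace" where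
  "pullback_obj V W X i j = \<lparr>carrier = i ` carrier V \<inter> j ` carrier W, form = form X\<rparr>"

(* sigma applied to a cospan [V -i-> X <-j- W]: the span [V <- V x_X W -> W] *)
definition sigma_cospan :: "qspace \<Rightarrow> qspace \<Rightarrow> qspace \<Rightarrow> (vec \<Rightarrow> vec) \<Rightarrow> (vec \<Rightarrow> vec) \<Rightarrow> span" where
  "sigma_cospan V W X i j =
     (pullback_obj V W X i j, inv_into (carrier V) i, inv_into (carrier W) j)"

end

theory Submission
  imports Defs
begin

(* First glue V and W along D, allowing degeneracy: on V + W take the form
   q(v, w) = q_V(v) + q_W(w) + b_W(tau v, w), where tau : V -> W is a linear map extending g o f^-1.
   With rho a linear left inverse of g, the maps v |-> (v, 0) and w |-> (f (rho w), w + g (rho w))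
   are isometric embeddings, and their images meet exactly in the image of D.  This amalgam may be
   degenerate, but every quadratic space A embeds into the non-degenerate space A + A^* with form
   q(a) + xi(a).  Composing, we get a cospan of non-degenerate spaces whose pullback is D again. *)

(* keep bit addition as ring addition (not XOR), so that add_ac normalises sums of bits *)
declare add_bit_eq_xor [simp del]

lemma bit_add_self [simp]: "(a::bit) + a = 0"
  by (cases a) simp_all

lemma vadd_comm: "vadd x y = vadd y x" unfolding vadd_def by auto
lemma vadd_assoc: "vadd (vadd x y) z = vadd x (vadd y z)" unfolding vadd_def by auto
lemma vadd_left_commute: "vadd x (vadd y z) = vadd y (vadd x z)" unfolding vadd_def by auto
lemmas vadd_ac = vadd_comm vadd_assoc vadd_left_commute

lemma vadd_self [simp]: "vadd x x = {}" unfolding vadd_def by auto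
lemma vadd_self_left [simp]: "vadd x (vadd x y) = y" unfolding vadd_def by auto
lemma vadd_empty [simp]: "vadd x {} = x" "vadd {} x = x" unfolding vadd_def by auto
lemma vadd_eq_empty_iff [simp]: "vadd x y = {} \<longleftrightarrow> x = y" "{} = vadd x y \<longleftrightarrow> x = y"
  unfolding vadd_def by auto

lemma subspace_zero: "subspace S \<Longrightarrow> {} \<in> S"
  by (simp add: subspace_def)

lemma subspace_vadd: "subspace S \<Longrightarrow> x \<in> S \<Longrightarrow> y \<in> S \<Longrightarrow> vadd x y \<in> S"
  by (simp add: subspace_def)

definition linear_on :: "vec set \<Rightarrow> (vec \<Rightarrow> vec) \<Rightarrow> bool" where
  "linear_on S h \<longleftrightarrow> (\<forall>x\<in>S. \<forall>y\<in>S. h (vadd x y) = vadd (h x) (h y))"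

lemma linear_on_zero: "subspace S \<Longrightarrow> linear_on S h \<Longrightarrow> h {} = {}"
  unfolding linear_on_def by (metis subspace_zero vadd_self vadd_self_left)

lemma inj_on_linear_on:
  assumes "subspace S" "linear_on S h" "\<And>x. x \<in> S \<Longrightarrow> h x = {} \<Longrightarrow> x = {}"
  shows "inj_on h S"
proof (rule inj_onI)
  fix x y assume "x \<in> S" "y \<in> S" "h x = h y"
  then have "h (vadd x y) = {}" using assms(2) by (simp add: linear_on_def)
  then have "vadd x y = {}" using assms(3) subspace_vadd[OF assms(1) \<open>x \<in> S\<close> \<open>y \<in> S\<close>] by blast
  then show "x = y" by simp
qed

lemma subspace_image_linear_on:
  assumes "subspace S" "linear_on S h"
  shows "subspace (h ` S)"
  unfolding subspace_def
proof (intro conjI ballI)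
  show "{} \<in> h ` S" using assms linear_on_zero subspace_zero by (metis image_eqI)
  fix x y assume "x \<in> h ` S" "y \<in> h ` S"
  then obtain a b where "a \<in> S" "b \<in> S" "x = h a" "y = h b" by blast
  then have "vadd x y = h (vadd a b)" "vadd a b \<in> S"
    using assms by (simp_all add: linear_on_def subspace_vadd)
  then show "vadd x y \<in> h ` S" by blast
qed

lemma linear_on_inv_into:
  assumes "subspace S" "linear_on S h" "inj_on h S"
  shows "linear_on (h ` S) (inv_into S h)"
  unfolding linear_on_def
proof (intro ballI)
  fix x y assume "x \<in> h ` S" "y \<in> h ` S"
  then obtain a b where ab: "a \<in> S" "b \<in> S" "x = h a" "y = h b" by blast
  then have "vadd x y = h (vadd a b)" "vadd a b \<in> S"
    using assms(1,2) by (simp_all add: linear_on_def subspace_vadd)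
  then show "inv_into S h (vadd x y) = vadd (inv_into S h x) (inv_into S h y)"
    using ab assms(3) by simp
qed

definition linear_retraction :: "vec set \<Rightarrow> vec set \<Rightarrow> (vec \<Rightarrow> vec) \<Rightarrow> bool" where
  "linear_retraction S N r \<longleftrightarrow> (\<forall>x\<in>S. r x \<in> N) \<and> (\<forall>x\<in>N. r x = x) \<and> linear_on S r"

lemma linear_retraction_trans:
  assumes "linear_retraction S M r" "linear_retraction M N t" "N \<subseteq> M"
  shows "linear_retraction S N (t \<circ> r)"
  using assms unfolding linear_retraction_def linear_on_def by auto

lemma vadd_translate_cases:
  assumes "x = a \<or> x = vadd s a" "y = b \<or> y = vadd s b"
  shows "vadd x y = vadd a b \<or> vadd x y = vadd s (vadd a b)"
  using assms by (auto simp: vadd_ac)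

lemma subspace_Un_translate:
  assumes "subspace N"
  shows "subspace (N \<union> vadd s ` N)"
  unfolding subspace_def
proof (intro conjI ballI)
  show "{} \<in> N \<union> vadd s ` N" using assms by (simp add: subspace_zero)
  fix x y assume "x \<in> N \<union> vadd s ` N" "y \<in> N \<union> vadd s ` N"
  then obtain a b where ab: "a \<in> N" "b \<in> N" "x = a \<or> x = vadd s a" "y = b \<or> y = vadd s b"
    by blast
  have "vadd a b \<in> N" using assms ab(1,2) by (rule subspace_vadd)
  with vadd_translate_cases[OF ab(3,4)] show "vadd x y \<in> N \<union> vadd s ` N" by (metis UnI1 UnI2 imageI)
qed

lemma linear_retraction_Un_translate:
  assumes N: "subspace N" and s: "s \<notin> N"
  shows "linear_retraction (N \<union> vadd s ` N) N (\<lambda>y. if y \<in> N then y else vadd s y)"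
proof -
  define t where "t = (\<lambda>y. if y \<in> N then y else vadd s y)"
  have t_eq: "t x = a" if "a \<in> N" "x = a \<or> x = vadd s a" for x a
  proof -
    have "vadd s a \<notin> N"
    proof
      assume "vadd s a \<in> N"
      then have "vadd (vadd s a) a \<in> N" using N that(1) by (simp add: subspace_vadd)
      then show False using s by (simp add: vadd_assoc)
    qed
    with that show ?thesis unfolding t_def by (elim disjE) simp_all
  qed
  have t_lin: "t (vadd x y) = vadd (t x) (t y)"
    if "x \<in> N \<union> vadd s ` N" "y \<in> N \<union> vadd s ` N" for x y
  proof -
    from that obtain a b where ab: "a \<in> N" "b \<in> N" "x = a \<or> x = vadd s a" "y = b \<or> y = vadd s b"
      by blast
    have "vadd a b \<in> N" using N ab(1,2) by (rule subspace_vadd)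
    from t_eq[OF this vadd_translate_cases[OF ab(3,4)]] t_eq[OF ab(1,3)] t_eq[OF ab(2,4)]
    show ?thesis by simp
  qed
  have t_in: "t x \<in> N" if "x \<in> N \<union> vadd s ` N" for x
  proof -
    from that obtain a where "a \<in> N" "x = a \<or> x = vadd s a" by blast
    with t_eq[OF this] show ?thesis by simp
  qed
  have t_id: "t x = x" if "x \<in> N" for x
    using t_eq[OF that] by simp
  have "linear_retraction (N \<union> vadd s ` N) N t"
    unfolding linear_retraction_def linear_on_def using t_in t_id t_lin by simp
  then show ?thesis by (simp only: t_def)
qed

lemma linear_retraction_exists:
  assumes "finite S" "subspace S" "subspace N" "N \<subseteq> S"
  shows "\<exists>r. linear_retraction S N r"
  using assms(3,4)
proof (induction "card S - card N" arbitrary: N rule: less_induct)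
  case less
  show ?case
  proof (cases "N = S")
    case True
    then have "linear_retraction S N id" by (simp add: linear_retraction_def linear_on_def)
    then show ?thesis by blast
  next
    case False
    then obtain s where s: "s \<in> S" "s \<notin> N" using less.prems by blast
    define N' where "N' = N \<union> vadd s ` N"
    have "subspace N'" unfolding N'_def using less.prems(1) by (rule subspace_Un_translate)
    have "vadd s a \<in> S" if "a \<in> N" for a
      using subspace_vadd[OF assms(2) s(1)] that less.prems(2) by blast
    then have "N' \<subseteq> S" unfolding N'_def using less.prems(2) by blast
    have "s \<in> vadd s ` N" using image_eqI[of s "vadd s" "{}"] subspace_zero[OF less.prems(1)] by simp
    then have "N \<subset> N'" using s(2) unfolding N'_def by blast
    then have "card N < card N'"
      using \<open>N' \<subseteq> S\<close> assms(1) by (meson finite_subset psubset_card_mono)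
    moreover have "card N' \<le> card S" using card_mono[OF assms(1) \<open>N' \<subseteq> S\<close>] .
    ultimately have "card S - card N' < card S - card N" by linarith
    then obtain r where "linear_retraction S N' r"
      using less.hyps[OF _ \<open>subspace N'\<close> \<open>N' \<subseteq> S\<close>] by blast
    from linear_retraction_trans[OF this[unfolded N'_def]
        linear_retraction_Un_translate[OF less.prems(1) s(2)]]
    show ?thesis by blast
  qed
qed

lemma subspace_complement_exists:
  assumes "finite S" "subspace S" "subspace N" "N \<subseteq> S"
  obtains C where "subspace C" "C \<subseteq> S" "C \<inter> N \<subseteq> {{}}"
    "\<And>y. y \<in> S \<Longrightarrow> \<exists>c\<in>C. \<exists>n\<in>N. y = vadd c n"
proof -
  obtain r where r: "linear_retraction S N r" using linear_retraction_exists[OF assms] ..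
  then have rN: "r y \<in> N" and r_id: "r (r y) = r y" if "y \<in> S" for y
    using that by (simp_all add: linear_retraction_def)
  have r_lin: "linear_on S r" using r by (simp add: linear_retraction_def)
  have rS: "r y \<in> S" if "y \<in> S" for y using rN[OF that] assms(4) by blast
  define C where "C = (\<lambda>y. vadd y (r y)) ` S"
  have "linear_on S (\<lambda>y. vadd y (r y))"
    using r by (simp add: linear_retraction_def linear_on_def vadd_ac)
  then have "subspace C" unfolding C_def by (rule subspace_image_linear_on[OF assms(2)])
  moreover have "C \<subseteq> S" unfolding C_def using subspace_vadd[OF assms(2)] rS by blast
  moreover have "C \<inter> N \<subseteq> {{}}"
  proof
    fix c assume c: "c \<in> C \<inter> N"
    then obtain y where y: "y \<in> S" "c = vadd y (r y)" unfolding C_def by blast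
    have "c = r c" using c r by (simp add: linear_retraction_def)
    also have "\<dots> = vadd (r y) (r (r y))"
      using r_lin y rS by (simp add: linear_on_def)
    also have "\<dots> = {}" using r_id[OF y(1)] by simp
    finally show "c \<in> {{}}" by simp
  qed
  moreover have "\<exists>c\<in>C. \<exists>n\<in>N. y = vadd c n" if "y \<in> S" for y
  proof (intro bexI)
    show "y = vadd (vadd y (r y)) (r y)" by (simp add: vadd_assoc)
    show "vadd y (r y) \<in> C" unfolding C_def using that by (rule imageI)
    show "r y \<in> N" using rN[OF that] .
  qed
  ultimately show ?thesis by (rule that)
qed

lemma polar_sym: "polar Q x y = polar Q y x"
  unfolding polar_def by (simp add: vadd_comm add_ac)

lemma form_vadd: "form Q (vadd x y) = form Q x + form Q y + polar Q x y"
  unfolding polar_def by (simp add: add_ac)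

context
  fixes Q :: qspace
  assumes Q: "quad_space Q"
begin

lemma form_empty: "form Q {} = 0"
  using Q by (simp add: quad_space_def)

lemma polar_vadd_left:
  "x \<in> carrier Q \<Longrightarrow> y \<in> carrier Q \<Longrightarrow> z \<in> carrier Q \<Longrightarrow>
    polar Q (vadd x y) z = polar Q x z + polar Q y z"
  using Q by (simp add: quad_space_def)

lemma polar_vadd_right:
  "x \<in> carrier Q \<Longrightarrow> y \<in> carrier Q \<Longrightarrow> z \<in> carrier Q \<Longrightarrow>
    polar Q z (vadd x y) = polar Q z x + polar Q z y"
  using polar_vadd_left polar_sym by metis

lemma polar_empty [simp]: "polar Q {} x = 0" "polar Q x {} = 0"
  unfolding polar_def by (simp_all add: form_empty)

end

lemma qmor_linear_on: "qmor Q R f \<Longrightarrow> linear_on (carrier Q) f"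
  by (simp add: qmor_def linear_on_def)

lemma qmor_empty: "quad_space Q \<Longrightarrow> qmor Q R f \<Longrightarrow> f {} = {}"
  using linear_on_zero qmor_linear_on quad_space_def by blast

lemma qmor_comp: "qmor Q R f \<Longrightarrow> qmor R S g \<Longrightarrow> qmor Q S (g \<circ> f)"
  unfolding qmor_def by (auto intro: comp_inj_on simp: inj_on_def)

(* Interleaving even and odd positions realises the direct sum of two subspaces inside vec. *)
definition vpair :: "vec \<Rightarrow> vec \<Rightarrow> vec" where
  "vpair a b = (\<lambda>n. 2 * n) ` a \<union> (\<lambda>n. Suc (2 * n)) ` b"

definition vfst :: "vec \<Rightarrow> vec" where
  "vfst z = {n. 2 * n \<in> z}"

definition vsnd :: "vec \<Rightarrow> vec" where
  "vsnd z = {n. Suc (2 * n) \<in> z}"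

lemma vfst_vpair [simp]: "vfst (vpair a b) = a"
  unfolding vfst_def vpair_def by auto presburger

lemma vsnd_vpair [simp]: "vsnd (vpair a b) = b"
  unfolding vsnd_def vpair_def by auto presburger

lemma vpair_eq_iff [simp]: "vpair a b = vpair c d \<longleftrightarrow> a = c \<and> b = d"
  by (metis vfst_vpair vsnd_vpair)

lemma vpair_empty [simp]: "vpair {} {} = {}"
  unfolding vpair_def by simp

lemma vpair_eq_empty_iff [simp]: "vpair a b = {} \<longleftrightarrow> a = {} \<and> b = {}"
  by (metis vpair_eq_iff vpair_empty)

lemma vadd_vpair: "vadd (vpair a b) (vpair c d) = vpair (vadd a c) (vadd b d)"
  unfolding vpair_def vadd_def by auto presburger+

definition bilinear_on :: "vec set \<Rightarrow> vec set \<Rightarrow> (vec \<Rightarrow> vec \<Rightarrow> bit) \<Rightarrow> bool" where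
  "bilinear_on S T \<beta> \<longleftrightarrow>
     (\<forall>x\<in>S. \<forall>x'\<in>S. \<forall>y\<in>T. \<beta> (vadd x x') y = \<beta> x y + \<beta> x' y) \<and>
     (\<forall>x\<in>S. \<forall>y\<in>T. \<forall>y'\<in>T. \<beta> x (vadd y y') = \<beta> x y + \<beta> x y')"

lemma bilinear_on_empty_right:
  assumes "bilinear_on S T \<beta>" "subspace T" "x \<in> S"
  shows "\<beta> x {} = 0"
  using assms subspace_zero[OF assms(2)] unfolding bilinear_on_def by (metis bit_add_self vadd_self)

definition sum_space :: "qspace \<Rightarrow> qspace \<Rightarrow> (vec \<Rightarrow> vec \<Rightarrow> bit) \<Rightarrow> qspace" where
  "sum_space Q R \<beta> =
     \<lparr>carrier = {vpair x y | x y. x \<in> carrier Q \<and> y \<in> carrier R},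
      form = (\<lambda>z. form Q (vfst z) + form R (vsnd z) + \<beta> (vfst z) (vsnd z))\<rparr>"

lemma vpair_in_sum_space_iff [simp]:
  "vpair x y \<in> carrier (sum_space Q R \<beta>) \<longleftrightarrow> x \<in> carrier Q \<and> y \<in> carrier R"
  by (auto simp: sum_space_def)

lemma sum_space_elem:
  "z \<in> carrier (sum_space Q R \<beta>) \<Longrightarrow> \<exists>x\<in>carrier Q. \<exists>y\<in>carrier R. z = vpair x y"
  by (auto simp: sum_space_def)

lemma form_sum_space_vpair [simp]:
  "form (sum_space Q R \<beta>) (vpair x y) = form Q x + form R y + \<beta> x y"
  by (simp add: sum_space_def)

lemma polar_sum_space_vpair:
  assumes R: "quad_space R" and \<beta>: "bilinear_on (carrier Q) (carrier R) \<beta>"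
    and "x \<in> carrier Q" "x' \<in> carrier Q" "y \<in> carrier R" "y' \<in> carrier R"
  shows "polar (sum_space Q R \<beta>) (vpair x y) (vpair x' y') =
    polar Q x x' + polar R y y' + \<beta> x y' + \<beta> x' y"
proof -
  have "vadd y y' \<in> carrier R" using R assms(5,6) by (simp add: quad_space_def subspace_vadd)
  then have "\<beta> (vadd x x') (vadd y y') = \<beta> x y + \<beta> x y' + \<beta> x' y + \<beta> x' y'"
    using \<beta> assms(3-6) by (simp add: bilinear_on_def add_ac)
  then show ?thesis by (simp add: polar_def vadd_vpair add_ac)
qed

lemma quad_space_sum_space:
  assumes Q: "quad_space Q" and R: "quad_space R" and \<beta>: "bilinear_on (carrier Q) (carrier R) \<beta>"
  shows "quad_space (sum_space Q R \<beta>)"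
proof -
  have sQ: "subspace (carrier Q)" and sR: "subspace (carrier R)"
    using Q R by (simp_all add: quad_space_def)
  have carrier: "carrier (sum_space Q R \<beta>) = (\<lambda>(x, y). vpair x y) ` (carrier Q \<times> carrier R)"
    by (auto simp: sum_space_def)
  then have "finite (carrier (sum_space Q R \<beta>))"
    using Q R by (simp add: quad_space_def)
  moreover have "subspace (carrier (sum_space Q R \<beta>))"
    unfolding subspace_def carrier
    using subspace_zero[OF sQ] subspace_zero[OF sR] subspace_vadd[OF sQ] subspace_vadd[OF sR]
    by (force simp: vadd_vpair)
  moreover have "form (sum_space Q R \<beta>) {} = 0"
    using form_sum_space_vpair[of Q R \<beta> "{}" "{}"]
    by (simp add: form_empty[OF Q] form_empty[OF R] bilinear_on_empty_right[OF \<beta> sR subspace_zero[OF sQ]])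
  ultimately show ?thesis
    unfolding quad_space_def
  proof (intro conjI ballI)
    fix z1 z2 z3
    assume "z1 \<in> carrier (sum_space Q R \<beta>)" "z2 \<in> carrier (sum_space Q R \<beta>)"
      "z3 \<in> carrier (sum_space Q R \<beta>)"
    then obtain x1 y1 x2 y2 x3 y3 where xy: "z1 = vpair x1 y1" "z2 = vpair x2 y2" "z3 = vpair x3 y3"
      "x1 \<in> carrier Q" "x2 \<in> carrier Q" "x3 \<in> carrier Q"
      "y1 \<in> carrier R" "y2 \<in> carrier R" "y3 \<in> carrier R"
      by (meson sum_space_elem)
    then show "polar (sum_space Q R \<beta>) (vadd z1 z2) z3 =
      polar (sum_space Q R \<beta>) z1 z3 + polar (sum_space Q R \<beta>) z2 z3"
      using \<beta> subspace_vadd[OF sQ xy(4,5)] subspace_vadd[OF sR xy(7,8)]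
      by (simp add: vadd_vpair polar_sum_space_vpair[OF R \<beta>] polar_vadd_left[OF Q]
          polar_vadd_left[OF R] bilinear_on_def add_ac)
  qed
qed

lemma qmor_sum_space_inl:
  assumes "quad_space Q" "quad_space R" "bilinear_on (carrier Q) (carrier R) \<beta>"
  shows "qmor Q (sum_space Q R \<beta>) (\<lambda>x. vpair x {})"
  using assms bilinear_on_empty_right[OF assms(3)]
  by (auto simp: qmor_def quad_space_def subspace_zero form_empty vadd_vpair intro: inj_onI)

lemma quad_space_zero_form:
  "finite C \<Longrightarrow> subspace C \<Longrightarrow> quad_space \<lparr>carrier = C, form = \<lambda>_. 0\<rparr>"
  by (simp add: quad_space_def polar_def)

definition dot :: "vec \<Rightarrow> vec \<Rightarrow> bit" where
  "dot x y = of_nat (card (x \<inter> y))"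

lemma of_nat_card_vadd:
  assumes "finite P" "finite Q"
  shows "(of_nat (card (vadd P Q)) :: bit) = of_nat (card P) + of_nat (card Q)"
proof -
  have "vadd P Q = (P \<union> Q) - (P \<inter> Q)" by (auto simp: vadd_def)
  then have "card (vadd P Q) = card (P \<union> Q) - card (P \<inter> Q)"
    using assms by (auto intro: card_Diff_subset)
  moreover have "card (P \<inter> Q) \<le> card (P \<union> Q)" using assms by (intro card_mono) auto
  ultimately have "card (vadd P Q) + 2 * card (P \<inter> Q) = card P + card Q"
    using card_Un_Int[OF assms] by linarith
  from arg_cong[OF this, of "of_nat :: nat \<Rightarrow> bit"] show ?thesis by simp
qed

lemma dot_vadd_left: "finite y \<Longrightarrow> dot (vadd x x') y = dot x y + dot x' y"
proof -
  assume "finite y"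
  moreover have "vadd x x' \<inter> y = vadd (x \<inter> y) (x' \<inter> y)" by (auto simp: vadd_def)
  ultimately show ?thesis by (simp add: dot_def of_nat_card_vadd)
qed

lemma dot_vadd_right: "finite y \<Longrightarrow> finite y' \<Longrightarrow> dot x (vadd y y') = dot x y + dot x y'"
proof -
  assume "finite y" "finite y'"
  moreover have "x \<inter> vadd y y' = vadd (x \<inter> y) (x \<inter> y')" by (auto simp: vadd_def)
  ultimately show ?thesis by (simp add: dot_def of_nat_card_vadd)
qed

lemma dot_empty [simp]: "dot {} y = 0" "dot x {} = 0"
  by (simp_all add: dot_def)

lemma dot_singleton: "n \<in> x \<Longrightarrow> dot x {n} = 1"
  by (simp add: dot_def Int_insert_right)

lemma bilinear_on_dot: "\<forall>y\<in>T. finite y \<Longrightarrow> bilinear_on S T dot"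
  by (simp add: bilinear_on_def dot_vadd_left dot_vadd_right)

lemma dual_subspace_exists:
  assumes "finite S" "subspace S"
  obtains C where "finite C" "subspace C" "\<forall>c\<in>C. finite c"
    "\<And>x. x \<in> S \<Longrightarrow> \<forall>c\<in>C. dot x c = 0 \<Longrightarrow> x = {}"
    "\<And>c. c \<in> C \<Longrightarrow> \<forall>x\<in>S. dot x c = 0 \<Longrightarrow> c = {}"
proof -
  (* K picks a coordinate in every nonzero vector of S, so the singletons {n}, n \<in> K, separate S;
     C is a complement of the annihilator of S in Pow K, i.e. a copy of the dual of S. *)
  define K where "K = (\<lambda>x. SOME n. n \<in> x) ` (S - {{}})"
  have "finite K" unfolding K_def using assms(1) by simp
  have K_meets: "\<exists>n\<in>K. n \<in> x" if "x \<in> S" "x \<noteq> {}" for x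
    using that some_in_eq[of x] unfolding K_def by blast
  have "subspace (Pow K)" by (auto simp: subspace_def vadd_def)
  define Y where "Y = {y \<in> Pow K. \<forall>x\<in>S. dot x y = 0}"
  have sY: "subspace Y" unfolding subspace_def
  proof (intro conjI ballI)
    show "{} \<in> Y" by (simp add: Y_def)
    fix y y' assume "y \<in> Y" "y' \<in> Y"
    moreover have "finite y" "finite y'"
      using calculation \<open>finite K\<close> by (auto simp: Y_def intro: finite_subset)
    moreover have "vadd y y' \<subseteq> K" using calculation by (auto simp: Y_def vadd_def)
    ultimately show "vadd y y' \<in> Y" by (simp add: Y_def dot_vadd_right)
  qed
  have "Y \<subseteq> Pow K" by (auto simp: Y_def)
  have "finite (Pow K)" using \<open>finite K\<close> by simp
  obtain C where C: "subspace C" "C \<subseteq> Pow K" "C \<inter> Y \<subseteq> {{}}"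
    and decomp: "\<And>y. y \<in> Pow K \<Longrightarrow> \<exists>c\<in>C. \<exists>n\<in>Y. y = vadd c n"
    using subspace_complement_exists[OF \<open>finite (Pow K)\<close> \<open>subspace (Pow K)\<close> sY \<open>Y \<subseteq> Pow K\<close>]
    by blast
  have fin: "finite c" if "c \<in> C" for c
    using that C(2) \<open>finite K\<close> finite_subset by blast
  show ?thesis
  proof (rule that)
    show "finite C" using C(2) \<open>finite K\<close> by (meson finite_Pow_iff finite_subset)
    show "subspace C" by (rule C(1))
    show "\<forall>c\<in>C. finite c" using fin by blast
    show "c = {}" if "c \<in> C" "\<forall>x\<in>S. dot x c = 0" for c
      using that C(2,3) by (auto simp: Y_def)
    show "x = {}" if x: "x \<in> S" and orth: "\<forall>c\<in>C. dot x c = 0" for x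
    proof (rule ccontr)
      assume "x \<noteq> {}"
      then obtain n where "n \<in> K" "n \<in> x" using K_meets x by blast
      then obtain c y where c: "c \<in> C" "y \<in> Y" "{n} = vadd c y" using decomp by blast
      have "finite y" using c(2) \<open>finite K\<close> by (auto simp: Y_def intro: finite_subset)
      have "1 = dot x {n}" using \<open>n \<in> x\<close> by (simp add: dot_singleton)
      also have "\<dots> = dot x c + dot x y"
        using c(3) fin[OF c(1)] \<open>finite y\<close> by (simp add: dot_vadd_right)
      also have "\<dots> = 0" using c x orth by (simp add: Y_def)
      finally show False by simp
    qed
  qed
qed

lemma nondeg_sum_space_dot:
  assumes A: "quad_space A" and C: "finite C" "subspace C" "\<forall>c\<in>C. finite c"
    and left: "\<And>x. x \<in> carrier A \<Longrightarrow> \<forall>c\<in>C. dot x c = 0 \<Longrightarrow> x = {}"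
    and right: "\<And>c. c \<in> C \<Longrightarrow> \<forall>x\<in>carrier A. dot x c = 0 \<Longrightarrow> c = {}"
  shows "nondeg (sum_space A \<lparr>carrier = C, form = \<lambda>_. 0\<rparr> dot)"
    (is "nondeg ?X")
proof -
  let ?C = "\<lparr>carrier = C, form = \<lambda>_. 0\<rparr> :: qspace"
  have C': "quad_space ?C" using C(1,2) by (rule quad_space_zero_form)
  have dot: "bilinear_on (carrier A) (carrier ?C) dot"
    using C(3) by (simp add: bilinear_on_dot)
  have "z = {}" if z: "z \<in> carrier ?X" and rad: "\<forall>z'\<in>carrier ?X. polar ?X z z' = 0" for z
  proof -
    obtain x c where xc: "x \<in> carrier A" "c \<in> C" "z = vpair x c"
      using sum_space_elem[OF z] by auto
    have polar_X: "polar ?X z (vpair x' c') = polar A x x' + dot x c' + dot x' c"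
      if "x' \<in> carrier A" "c' \<in> C" for x' c'
      using polar_sum_space_vpair[OF C' dot xc(1) that(1)] xc that by (simp add: polar_def)
    have "{} \<in> carrier A" "{} \<in> C"
      using A C(2) by (simp_all add: quad_space_def subspace_zero)
    have "x = {}"
    proof (rule left[OF xc(1)], intro ballI)
      fix c' assume "c' \<in> C"
      then show "dot x c' = 0"
        using rad[rule_format] polar_X[OF \<open>{} \<in> carrier A\<close> \<open>c' \<in> C\<close>] \<open>c' \<in> C\<close> \<open>{} \<in> carrier A\<close>
        by (simp add: polar_empty[OF A])
    qed
    moreover have "c = {}"
    proof (rule right[OF xc(2)], intro ballI)
      fix x' assume "x' \<in> carrier A"
      then show "dot x' c = 0"
        using rad[rule_format] polar_X[OF \<open>x' \<in> carrier A\<close> \<open>{} \<in> C\<close>] \<open>x' \<in> carrier A\<close> \<open>{} \<in> C\<close> \<open>x = {}\<close>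
        by (simp add: polar_empty[OF A])
    qed
    ultimately show ?thesis using xc(3) by simp
  qed
  then show ?thesis
    unfolding nondeg_def using quad_space_sum_space[OF A C' dot] by blast
qed

lemma quad_space_embeds_in_nondeg:
  assumes A: "quad_space A"
  shows "\<exists>X e. nondeg X \<and> qmor A X e"
proof -
  have "finite (carrier A)" "subspace (carrier A)" using A by (simp_all add: quad_space_def)
  from dual_subspace_exists[OF this] obtain C where C: "finite C" "subspace C" "\<forall>c\<in>C. finite c"
    and pairing: "\<And>x. x \<in> carrier A \<Longrightarrow> \<forall>c\<in>C. dot x c = 0 \<Longrightarrow> x = {}"
      "\<And>c. c \<in> C \<Longrightarrow> \<forall>x\<in>carrier A. dot x c = 0 \<Longrightarrow> c = {}"
    by blast
  have "nondeg (sum_space A \<lparr>carrier = C, form = \<lambda>_. 0\<rparr> dot)"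
    using A C pairing by (rule nondeg_sum_space_dot)
  moreover have "qmor A (sum_space A \<lparr>carrier = C, form = \<lambda>_. 0\<rparr> dot) (\<lambda>x. vpair x {})"
    by (intro qmor_sum_space_inl A quad_space_zero_form C(1,2)) (simp add: bilinear_on_dot C(3))
  ultimately show ?thesis by blast
qed

lemma linear_left_inverse_exists:
  assumes "finite T" "subspace T" "subspace S" "linear_on S g" "inj_on g S" "g ` S \<subseteq> T"
  obtains \<rho> where "\<forall>y\<in>T. \<rho> y \<in> S" "linear_on T \<rho>" "\<forall>x\<in>S. \<rho> (g x) = x"
proof -
  have "subspace (g ` S)" using assms(3,4) by (rule subspace_image_linear_on)
  with linear_retraction_exists[OF assms(1,2) _ assms(6)]
  obtain r where r: "linear_retraction T (g ` S) r" by blast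
  have inv_lin: "linear_on (g ` S) (inv_into S g)"
    using assms(3-5) by (rule linear_on_inv_into)
  show ?thesis
  proof (rule that[of "\<lambda>y. inv_into S g (r y)"])
    show "\<forall>y\<in>T. inv_into S g (r y) \<in> S"
      using r by (auto simp: linear_retraction_def inv_into_into)
    show "\<forall>x\<in>S. inv_into S g (r (g x)) = x"
      using r assms(5) by (simp add: linear_retraction_def)
    show "linear_on T (\<lambda>y. inv_into S g (r y))"
      unfolding linear_on_def
    proof (intro ballI)
      fix x y assume "x \<in> T" "y \<in> T"
      then have "r x \<in> g ` S" "r y \<in> g ` S" and r_add: "r (vadd x y) = vadd (r x) (r y)"
        using r by (simp_all add: linear_retraction_def linear_on_def)
      from inv_lin[unfolded linear_on_def, rule_format, OF this(1,2)]
      show "inv_into S g (r (vadd x y)) = vadd (inv_into S g (r x)) (inv_into S g (r y))"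
        by (simp only: r_add)
    qed
  qed
qed

lemma qmor_left_inverse_exists:
  assumes "quad_space D" "quad_space V" "qmor D V f"
  obtains \<rho> where "\<forall>v\<in>carrier V. \<rho> v \<in> carrier D" "linear_on (carrier V) \<rho>"
    "\<forall>d\<in>carrier D. \<rho> (f d) = d"
proof -
  have "finite (carrier V)" "subspace (carrier V)" "subspace (carrier D)"
    using assms(1,2) by (simp_all add: quad_space_def)
  moreover have "linear_on (carrier D) f" "inj_on f (carrier D)" "f ` carrier D \<subseteq> carrier V"
    using assms(3) by (auto simp: qmor_def linear_on_def)
  ultimately show ?thesis using that by (rule linear_left_inverse_exists)
qed

lemma bilinear_on_polar_linear:
  assumes W: "quad_space W" and "linear_on S \<tau>" "\<forall>v\<in>S. \<tau> v \<in> carrier W"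
  shows "bilinear_on S (carrier W) (\<lambda>v w. polar W (\<tau> v) w)"
  using assms by (simp add: bilinear_on_def linear_on_def polar_vadd_left[OF W] polar_vadd_right[OF W])

lemma qmor_glue:
  assumes W: "quad_space W" and D: "quad_space D" and f: "qmor D V f" and g: "qmor D W g"
    and \<rho>: "\<forall>w\<in>carrier W. \<rho> w \<in> carrier D" "linear_on (carrier W) \<rho>" "\<forall>d\<in>carrier D. \<rho> (g d) = d"
    and \<tau>: "\<forall>d\<in>carrier D. \<tau> (f d) = g d"
  shows "qmor W (sum_space V W (\<lambda>v w. polar W (\<tau> v) w)) (\<lambda>w. vpair (f (\<rho> w)) (vadd w (g (\<rho> w))))"
    (is "qmor W ?X ?j")
proof -
  have sW: "subspace (carrier W)" and sD: "subspace (carrier D)"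
    using W D by (simp_all add: quad_space_def)
  have fV: "f d \<in> carrier V" and gW: "g d \<in> carrier W" if "d \<in> carrier D" for d
    using f g that by (simp_all add: qmor_def)
  have j_in: "?j w \<in> carrier ?X" if "w \<in> carrier W" for w
    using that \<rho>(1) fV gW subspace_vadd[OF sW] by simp
  have j_lin: "linear_on (carrier W) ?j"
    unfolding linear_on_def
  proof (intro ballI)
    fix w w' assume "w \<in> carrier W" "w' \<in> carrier W"
    then show "?j (vadd w w') = vadd (?j w) (?j w')"
      using \<rho> f g by (simp add: linear_on_def qmor_def vadd_vpair vadd_ac)
  qed
  have "form ?X (?j w) = form W w" if w: "w \<in> carrier W" for w
  proof -
    define d where "d = \<rho> w"
    have d: "d \<in> carrier D" using \<rho>(1) w by (simp add: d_def)
    have "form ?X (?j w) = form V (f d) + form W (vadd w (g d)) + polar W (g d) (vadd w (g d))"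
      using \<tau> d by (simp add: d_def)
    also have "\<dots> = form W (g d) + form W (vadd w (g d)) + polar W (g d) (vadd w (g d))"
      using f g d by (simp add: qmor_def)
    also have "\<dots> = form W (vadd (g d) (vadd w (g d)))"
      by (simp add: form_vadd)
    also have "\<dots> = form W w" by (simp add: vadd_ac)
    finally show ?thesis .
  qed
  moreover have "inj_on ?j (carrier W)"
  proof (rule inj_on_linear_on[OF sW j_lin])
    fix w assume w: "w \<in> carrier W" and "?j w = {}"
    then have "f (\<rho> w) = {}" "w = g (\<rho> w)" by simp_all
    moreover have "f {} = {}" "g {} = {}" using qmor_empty D f g by blast+
    moreover have "inj_on f (carrier D)" using f by (simp add: qmor_def)
    ultimately show "w = {}"
      using \<rho>(1) w subspace_zero[OF sD] by (metis inj_onD)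
  qed
  ultimately show ?thesis
    using j_in j_lin by (simp add: qmor_def linear_on_def)
qed

definition is_pullback ::
  "qspace \<Rightarrow> qspace \<Rightarrow> (vec \<Rightarrow> vec) \<Rightarrow> (vec \<Rightarrow> vec) \<Rightarrow> qspace \<Rightarrow> (vec \<Rightarrow> vec) \<Rightarrow> (vec \<Rightarrow> vec) \<Rightarrow> bool"
  where
  "is_pullback V W i j D f g \<longleftrightarrow>
     (\<forall>v\<in>carrier V. \<forall>w\<in>carrier W. i v = j w \<longleftrightarrow> (\<exists>d\<in>carrier D. v = f d \<and> w = g d))"

lemma is_pullback_glue:
  assumes \<rho>: "\<forall>w\<in>carrier W. \<rho> w \<in> carrier D" "\<forall>d\<in>carrier D. \<rho> (g d) = d"
  shows "is_pullback V W (\<lambda>v. vpair v {}) (\<lambda>w. vpair (f (\<rho> w)) (vadd w (g (\<rho> w)))) D f g"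
  unfolding is_pullback_def
proof (intro ballI iffI)
  fix v w assume "v \<in> carrier V" "w \<in> carrier W" "vpair v {} = vpair (f (\<rho> w)) (vadd w (g (\<rho> w)))"
  then show "\<exists>d\<in>carrier D. v = f d \<and> w = g d" using \<rho>(1) by auto
next
  fix v w assume "\<exists>d\<in>carrier D. v = f d \<and> w = g d"
  then show "vpair v {} = vpair (f (\<rho> w)) (vadd w (g (\<rho> w)))" using \<rho>(2) by auto
qed

lemma amalgamation_exists:
  assumes V: "quad_space V" and W: "quad_space W" and D: "quad_space D"
    and f: "qmor D V f" and g: "qmor D W g"
  shows "\<exists>X i j. quad_space X \<and> qmor V X i \<and> qmor W X j \<and> is_pullback V W i j D f g"
proof -
  obtain \<sigma> where \<sigma>: "\<forall>v\<in>carrier V. \<sigma> v \<in> carrier D" "linear_on (carrier V) \<sigma>"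
    "\<forall>d\<in>carrier D. \<sigma> (f d) = d"
    using D V f by (rule qmor_left_inverse_exists)
  obtain \<rho> where \<rho>: "\<forall>w\<in>carrier W. \<rho> w \<in> carrier D" "linear_on (carrier W) \<rho>"
    "\<forall>d\<in>carrier D. \<rho> (g d) = d"
    using D W g by (rule qmor_left_inverse_exists)
  define \<tau> where "\<tau> v = g (\<sigma> v)" for v
  have "linear_on (carrier V) \<tau>" "\<forall>v\<in>carrier V. \<tau> v \<in> carrier W"
    using \<sigma> g by (simp_all add: \<tau>_def linear_on_def qmor_def)
  then have \<beta>: "bilinear_on (carrier V) (carrier W) (\<lambda>v w. polar W (\<tau> v) w)"
    using W by (intro bilinear_on_polar_linear)
  have "\<forall>d\<in>carrier D. \<tau> (f d) = g d" using \<sigma>(3) by (simp add: \<tau>_def)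
  then show ?thesis
    using quad_space_sum_space[OF V W \<beta>] qmor_sum_space_inl[OF V W \<beta>]
      qmor_glue[OF W D f g \<rho>] is_pullback_glue[OF \<rho>(1,3)] by blast
qed

lemma is_pullback_comp:
  assumes pb: "is_pullback V W i j D f g" and i: "qmor V X i" and j: "qmor W X j" and e: "qmor X Y e"
  shows "is_pullback V W (e \<circ> i) (e \<circ> j) D f g"
proof -
  have "e (i v) = e (j w) \<longleftrightarrow> i v = j w" if "v \<in> carrier V" "w \<in> carrier W" for v w
  proof (rule inj_on_eq_iff)
    show "inj_on e (carrier X)" using e by (simp add: qmor_def)
    show "i v \<in> carrier X" "j w \<in> carrier X" using i j that by (simp_all add: qmor_def)
  qed
  then show ?thesis using pb by (simp add: is_pullback_def)
qed

lemma pullback_obj_eq_image: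
  assumes f: "qmor D V f" and g: "qmor D W g" and pb: "is_pullback V W i j D f g"
  shows "pullback_obj V W X i j = \<lparr>carrier = (i \<circ> f) ` carrier D, form = form X\<rparr>"
proof -
  have "i ` carrier V \<inter> j ` carrier W = (i \<circ> f) ` carrier D"
  proof
    show "i ` carrier V \<inter> j ` carrier W \<subseteq> (i \<circ> f) ` carrier D"
    proof
      fix p assume "p \<in> i ` carrier V \<inter> j ` carrier W"
      then obtain v w where "v \<in> carrier V" "w \<in> carrier W" "p = i v" "i v = j w" by auto
      with pb obtain d where "d \<in> carrier D" "v = f d" by (auto simp: is_pullback_def)
      with \<open>p = i v\<close> show "p \<in> (i \<circ> f) ` carrier D" by simp
    qed
    show "(i \<circ> f) ` carrier D \<subseteq> i ` carrier V \<inter> j ` carrier W"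
    proof
      fix p assume "p \<in> (i \<circ> f) ` carrier D"
      then obtain d where d: "d \<in> carrier D" "p = i (f d)" by auto
      then have "f d \<in> carrier V" "g d \<in> carrier W" using f g by (simp_all add: qmor_def)
      moreover from this have "i (f d) = j (g d)" using pb d(1) by (auto simp: is_pullback_def)
      ultimately show "p \<in> i ` carrier V \<inter> j ` carrier W" using d(2) by auto
    qed
  qed
  then show ?thesis by (simp add: pullback_obj_def)
qed

lemma qmor_inv_into:
  assumes "subspace (carrier D)" and F: "qmor D X F"
  shows "qmor \<lparr>carrier = F ` carrier D, form = form X\<rparr> D (inv_into (carrier D) F)"
proof -
  have inj: "inj_on F (carrier D)" using F by (simp add: qmor_def)
  have "linear_on (F ` carrier D) (inv_into (carrier D) F)"
    using assms(1) qmor_linear_on[OF F] inj by (rule linear_on_inv_into)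
  then show ?thesis
    using inj F by (auto simp: qmor_def linear_on_def inv_into_into inj_on_inv_into)
qed

lemma span_eq_sigma_cospan:
  assumes D: "quad_space D" and f: "qmor D V f" and g: "qmor D W g"
    and i: "qmor V X i" and j: "qmor W X j" and pb: "is_pullback V W i j D f g"
  shows "span_eq (sigma_cospan V W X i j) (D, f, g)"
proof -
  let ?h = "inv_into (carrier D) (i \<circ> f)"
  have F: "qmor D X (i \<circ> f)" using f i by (rule qmor_comp)
  note P = pullback_obj_eq_image[OF f g pb, of X]
  have "qmor (pullback_obj V W X i j) D ?h"
    unfolding P using D F by (intro qmor_inv_into) (simp_all add: quad_space_def)
  moreover have "?h ` carrier (pullback_obj V W X i j) = carrier D"
    unfolding P qspace.simps using F by (intro inv_into_image_cancel) (simp_all add: qmor_def)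
  moreover have "f (?h p) = inv_into (carrier V) i p \<and> g (?h p) = inv_into (carrier W) j p"
    if p: "p \<in> carrier (pullback_obj V W X i j)" for p
  proof -
    obtain d where d: "d \<in> carrier D" "p = i (f d)" using p unfolding P by auto
    then have "f d \<in> carrier V" "g d \<in> carrier W" using f g by (simp_all add: qmor_def)
    moreover from this have "p = j (g d)" using pb d by (auto simp: is_pullback_def)
    moreover have "?h p = d"
      using inv_into_f_f[of "i \<circ> f", OF _ d(1)] F d(2) by (simp add: qmor_def)
    ultimately show ?thesis
      using inv_into_f_f[of i "carrier V" "f d"] inv_into_f_f[of j "carrier W" "g d"] i j d(2)
      by (simp add: qmor_def)
  qed
  ultimately show ?thesis unfolding span_eq_def sigma_cospan_def by auto
qed

theorem proposition4p20:
  fixes V W D :: qspace and f g :: "vec \<Rightarrow> vec"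
  assumes "nondeg V" and "nondeg W" and "quad_space D"
    and "qmor D V f" and "qmor D W g"
  shows "\<exists>X i j. nondeg X \<and> qmor V X i \<and> qmor W X j \<and>
           span_eq (sigma_cospan V W X i j) (D, f, g)"
proof -
  have "quad_space V" "quad_space W" using assms(1,2) by (simp_all add: nondeg_def)
  then obtain X0 i0 j0 where X0: "quad_space X0" "qmor V X0 i0" "qmor W X0 j0"
    and pb: "is_pullback V W i0 j0 D f g"
    using amalgamation_exists assms(3-5) by blast
  obtain X e where X: "nondeg X" "qmor X0 X e"
    using quad_space_embeds_in_nondeg[OF X0(1)] by blast
  have i: "qmor V X (e \<circ> i0)" and j: "qmor W X (e \<circ> j0)"
    using X0(2,3) X(2) by (auto intro: qmor_comp)
  have "is_pullback V W (e \<circ> i0) (e \<circ> j0) D f g"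
    using pb X0(2,3) X(2) by (rule is_pullback_comp)
  with assms(3-5) i j have "span_eq (sigma_cospan V W X (e \<circ> i0) (e \<circ> j0)) (D, f, g)"
    by (intro span_eq_sigma_cospan)
  with X(1) i j show ?thesis by blast
qed

end
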